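(* Let $m$ be a monomial of $S=k[x_1,\dots,x_n]$ with $\max(m)=k$, and let $B=\mathrm{Borel}(m)$. Then for every $i\ge0$, \[b_{i-1}(B)+b_i\!\left(\mathrm{Borel}\!\left(\tfrac{m}{x_k}\right)\right)=\binom{k}{i}\,w_k(B),\] where $b_{-1}(B)=0$ and, if $m=x_k$, $\mathrm{Borel}(1)=S$ (with $b_0(S)=1$, $b_i(S)=0$ for $i>0$).
   Context: $\mathrm{Borel}(\mu)$ is the smallest monomial ideal containing $\mu$ closed under Borel moves $\nu\mapsto\nu\frac{x_{a_1}}{x_{b_1}}\cdots\frac{x_{a_s}}{x_{b_s}}$ ($a_t<b_t$, all $x_{b_t}\mid\nu$). For a monomial $\mu=x_{k_1}\cdots x_{k_r}$ ($k_1\le\dots\le k_r$), $\max(\mu)=k_r$. $w_k(B)$ is the number of minimal monomial generators $\mu$ of $B$ with $\max(\mu)=k$. $b_i(I)=\dim_k\operatorname{Tor}_i^S(I,k)$ is the $i$-th total Betti number of the ideal $I$ (so $b_0(I)$ is the number of minimal generators). *)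

theory Defs
  imports Complex_Main "HOL-Library.Multiset" "HOL-Library.Function_Algebras"
begin

text \<open>Monomials of S = k[x_1,...,x_n] are multisets of variable indices in {1..n};
  x_{k_1}...x_{k_r} corresponds to the multiset {#k_1,...,k_r#}. Divisibility is subset_mset.
  A monomial ideal is represented by its set of monomials.\<close>

type_synonym mon = "nat multiset"

definition monomials :: "nat \<Rightarrow> mon set" where
  "monomials n = {\<mu>. set_mset \<mu> \<subseteq> {1..n}}"

definition maxvar :: "mon \<Rightarrow> nat" where
  "maxvar \<mu> = Max (set_mset \<mu>)"

inductive_set Borel :: "nat \<Rightarrow> mon \<Rightarrow> mon set" for n :: nat and \<mu> :: mon where
  base: "set_mset \<mu> \<subseteq> {1..n} \<Longrightarrow> \<mu> \<in> Borel n \<mu>"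
| move: "\<nu> \<in> Borel n \<mu> \<Longrightarrow> b \<in># \<nu> \<Longrightarrow> 1 \<le> a \<Longrightarrow> a < b \<Longrightarrow> \<nu> - {#b#} + {#a#} \<in> Borel n \<mu>"
| mult: "\<nu> \<in> Borel n \<mu> \<Longrightarrow> c \<in> {1..n} \<Longrightarrow> \<nu> + {#c#} \<in> Borel n \<mu>"

definition mingens :: "mon set \<Rightarrow> mon set" where
  "mingens I = {\<mu> \<in> I. \<forall>\<nu>\<in>I. \<nu> \<subseteq># \<mu> \<longrightarrow> \<nu> = \<mu>}"

definition w :: "nat \<Rightarrow> mon set \<Rightarrow> nat" where
  "w k I = card {\<mu> \<in> mingens I. maxvar \<mu> = k}"

text \<open>Tor_i^S(I,k) computed via the Koszul complex K(x_1,...,x_n) tensored with I, in each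
  multidegree alpha. The degree-alpha part of I \<otimes> \<wedge>^i k^n has basis the i-subsets F of {1..n}
  with x^(alpha - e_F) \<in> I; chains are functions on these sets with values in the field.\<close>

definition kface :: "nat \<Rightarrow> mon set \<Rightarrow> mon \<Rightarrow> nat \<Rightarrow> nat set set" where
  "kface n I \<alpha> i = {F. F \<subseteq> {1..n} \<and> card F = i \<and> mset_set F \<subseteq># \<alpha> \<and> \<alpha> - mset_set F \<in> I}"

definition kchains :: "nat \<Rightarrow> mon set \<Rightarrow> mon \<Rightarrow> nat \<Rightarrow> (nat set \<Rightarrow> 'a::field) set" where
  "kchains n I \<alpha> i = {c. \<forall>F. F \<notin> kface n I \<alpha> i \<longrightarrow> c F = 0}"

definition ksign :: "nat \<Rightarrow> nat set \<Rightarrow> 'a::field" where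
  "ksign j F = (-1) ^ card {l \<in> F. l < j}"

text \<open>Koszul differential d_i : C_i -> C_{i-1}, e_F |-> sum_{j in F} sign(j,F) x_j e_{F-j}
  (d_0 = 0).\<close>

definition kdiff :: "nat \<Rightarrow> mon set \<Rightarrow> mon \<Rightarrow> nat \<Rightarrow> (nat set \<Rightarrow> 'a::field) \<Rightarrow> (nat set \<Rightarrow> 'a)" where
  "kdiff n I \<alpha> i c = (\<lambda>G. if i = 0 then 0 else if G \<in> kface n I \<alpha> (i - 1) then
      (\<Sum>j\<in>{1..n} - G. if insert j G \<in> kface n I \<alpha> i then ksign j (insert j G) * c (insert j G) else 0)
     else 0)"

definition khomdim :: "'a::field itself \<Rightarrow> nat \<Rightarrow> mon set \<Rightarrow> mon \<Rightarrow> nat \<Rightarrow> nat" where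
  "khomdim _ n I \<alpha> i =
     vector_space.dim (\<lambda>(r::'a) f x. r * f x) {c \<in> kchains n I \<alpha> i. kdiff n I \<alpha> i c = 0}
   - vector_space.dim (\<lambda>(r::'a) f x. r * f x) (kdiff n I \<alpha> (Suc i) ` kchains n I \<alpha> (Suc i))"

definition betti :: "'a::field itself \<Rightarrow> nat \<Rightarrow> mon set \<Rightarrow> nat \<Rightarrow> nat" where
  "betti T n I i = (\<Sum>\<alpha> \<in> {\<alpha> \<in> monomials n. khomdim T n I \<alpha> i \<noteq> 0}. khomdim T n I \<alpha> i)"

end

theory Submission
  imports Defs
begin

text \<open>A monomial lies in \<open>Borel(m)\<close> exactly when, for every \<open>j\<close>, it has at least as many
  variables of index \<open>\<le> j\<close> as \<open>m\<close>; the minimal generators are those of the same degree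
  as \<open>m\<close>. In a fixed multidegree \<open>\<alpha>\<close> the Koszul complex of such an ideal splits along the
  largest variable \<open>t\<close> of \<open>\<alpha>\<close>: a face \<open>G\<close> with \<open>t \<notin> G\<close> for which \<open>G \<union> {t}\<close> is still a face
  cancels against \<open>G \<union> {t}\<close>, and the surviving faces are the sets \<open>F \<subseteq> {1..<max g}\<close> with
  \<open>\<alpha> = g x\<^sub>F\<close> and \<open>g\<close> a minimal generator. This gives the Eliahou--Kervaire formula
  \<open>b\<^sub>i(Borel(m)) = (\<Sum>g. max g - 1 choose i)\<close>. The minimal generators of \<open>Borel(m)\<close> are
  precisely the products \<open>g' x\<^sub>l\<close> with \<open>g'\<close> a minimal generator of \<open>Borel(m / x\<^sub>k)\<close> and
  \<open>max g' \<le> l \<le> k\<close>, so the claimed identity reduces, generator by generator, to the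
  hockey-stick identity for binomial coefficients.\<close>

section \<open>Principal Borel ideals\<close>

definition count_le :: "mon \<Rightarrow> nat \<Rightarrow> nat" where
  "count_le \<mu> j = size (filter_mset (\<lambda>x. x \<le> j) \<mu>)"

definition dominates :: "mon \<Rightarrow> mon \<Rightarrow> bool" where
  "dominates \<mu> m \<longleftrightarrow> (\<forall>j. count_le m j \<le> count_le \<mu> j)"

lemma count_le_empty [simp]: "count_le {#} j = 0"
  by (simp add: count_le_def)

lemma count_le_add_mset [simp]: "count_le (add_mset a \<nu>) j = count_le \<nu> j + (if a \<le> j then 1 else 0)"
  by (simp add: count_le_def)

lemma count_le_diff_single:
  "b \<in># \<nu> \<Longrightarrow> count_le (\<nu> - {#b#}) j + (if b \<le> j then 1 else 0) = count_le \<nu> j"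
  using count_le_add_mset[of b "\<nu> - {#b#}" j] by simp

lemma count_le_le_size: "count_le \<mu> j \<le> size \<mu>"
  unfolding count_le_def by (rule size_filter_mset_lesseq)

lemma count_le_eq_size_iff: "count_le \<mu> j = size \<mu> \<longleftrightarrow> (\<forall>x\<in>#\<mu>. x \<le> j)"
proof (induction \<mu>)
  case (add x \<mu>)
  then show ?case using count_le_le_size[of \<mu> j] by auto
qed simp

lemma count_le_eq_0_iff: "count_le \<mu> j = 0 \<longleftrightarrow> (\<forall>x\<in>#\<mu>. j < x)"
  by (auto simp: count_le_def filter_mset_eq_mempty_iff not_le)

lemma dominates_size_le:
  assumes "set_mset m \<subseteq> {1..n}" "set_mset \<mu> \<subseteq> {1..n}" "dominates \<mu> m"
  shows "size m \<le> size \<mu>"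
proof -
  have "count_le m n = size m" "count_le \<mu> n = size \<mu>"
    using assms(1,2) by (auto simp: count_le_eq_size_iff)
  then show ?thesis using assms(3) unfolding dominates_def by metis
qed

lemma Borel_imp_dominates:
  "\<mu> \<in> Borel n m \<Longrightarrow> set_mset \<mu> \<subseteq> {1..n} \<and> dominates \<mu> m"
proof (induction rule: Borel.induct)
  case base
  then show ?case by (simp add: dominates_def)
next
  case (move \<nu> b a)
  have "count_le \<nu> j \<le> count_le (\<nu> - {#b#} + {#a#}) j" for j
    using count_le_diff_single[OF move(2), of j] \<open>a < b\<close> by (auto split: if_splits)
  moreover have "set_mset (\<nu> - {#b#} + {#a#}) \<subseteq> {1..n}"
    using move by (auto dest: in_diffD)
  ultimately show ?case
    using move.IH unfolding dominates_def by (meson le_trans)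
next
  case (mult \<nu> c)
  then show ?case by (auto simp: dominates_def intro: le_trans)
qed

lemma Borel_add_mset: "\<nu> \<in> Borel n \<mu> \<Longrightarrow> c \<in> {1..n} \<Longrightarrow> add_mset c \<nu> \<in> Borel n \<mu>"
  using Borel.mult by fastforce

lemma Borel_add_mset_mono:
  assumes "\<nu> \<in> Borel n m" "a \<le> b" "1 \<le> a" "b \<le> n"
  shows "add_mset a \<nu> \<in> Borel n (add_mset b m)"
  using assms(1)
proof (induction rule: Borel.induct)
  case base
  then have bm: "add_mset b m \<in> Borel n (add_mset b m)"
    using assms by (intro Borel.base) auto
  show ?case
  proof (cases "a = b")
    case False
    then have "a < b" using assms by simp
    from Borel.move[OF bm _ assms(3) this] show ?thesis by simp
  qed (use bm in simp)
next
  case (move \<nu> b' a')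
  obtain \<nu>0 where "\<nu> = add_mset b' \<nu>0"
    using move(2) by (metis mset_add)
  moreover have "b' \<in># add_mset a \<nu>" using move(2) by simp
  note Borel.move[OF move(5) this move(3,4)]
  ultimately show ?case by (simp add: add_mset_commute)
next
  case (mult \<nu> c)
  from Borel.mult[OF mult(3,2)] show ?case by (simp add: add_mset_commute)
qed

lemma mem_Borel_empty: "set_mset \<mu> \<subseteq> {1..n} \<Longrightarrow> \<mu> \<in> Borel n {#}"
  by (induction \<mu>) (auto intro: Borel.base Borel_add_mset)

text \<open>Induction on the degree of \<open>m\<close>, stripping the smallest variable from both monomials.\<close>

lemma dominates_imp_Borel:
  "set_mset m \<subseteq> {1..n} \<Longrightarrow> set_mset \<mu> \<subseteq> {1..n} \<Longrightarrow> dominates \<mu> m \<Longrightarrow> \<mu> \<in> Borel n m"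
proof (induction "size m" arbitrary: m \<mu>)
  case 0
  then show ?case by (simp add: mem_Borel_empty)
next
  case (Suc s)
  define b where "b = Min (set_mset m)"
  have "m \<noteq> {#}" using Suc.hyps by auto
  then have bm: "b \<in># m" and b_min: "\<forall>x\<in>#m. b \<le> x"
    by (auto simp: b_def)
  have "count_le m b \<noteq> 0"
    using bm count_le_eq_0_iff[of m b] by auto
  moreover have "count_le m b \<le> count_le \<mu> b"
    using Suc.prems(3) by (simp add: dominates_def)
  ultimately obtain x where x: "x \<in># \<mu>" "x \<le> b"
    using count_le_eq_0_iff[of \<mu> b] by (auto simp: not_less)
  define a where "a = Min (set_mset \<mu>)"
  have am: "a \<in># \<mu>" and a_min: "\<forall>x\<in>#\<mu>. a \<le> x"
    using x(1) by (auto simp: a_def intro!: Min_in)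
  have ab: "a \<le> b"
    using a_min x by (meson le_trans)
  have "dominates (\<mu> - {#a#}) (m - {#b#})"
    unfolding dominates_def
  proof
    fix j
    show "count_le (m - {#b#}) j \<le> count_le (\<mu> - {#a#}) j"
    proof (cases "j < b")
      case True
      then have "count_le m j = 0" using b_min count_le_eq_0_iff by fastforce
      then show ?thesis using count_le_diff_single[OF bm, of j] by simp
    next
      case False
      then show ?thesis
        using count_le_diff_single[OF am, of j] count_le_diff_single[OF bm, of j] ab
          Suc.prems(3)[unfolded dominates_def, rule_format, of j]
        by (auto split: if_splits)
    qed
  qed
  moreover have "s = size (m - {#b#})"
    using Suc.hyps(2) bm by (simp add: size_Diff_singleton)
  moreover have "set_mset (m - {#b#}) \<subseteq> {1..n}" "set_mset (\<mu> - {#a#}) \<subseteq> {1..n}"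
    using Suc.prems(1,2) by (auto dest: in_diffD)
  ultimately have "\<mu> - {#a#} \<in> Borel n (m - {#b#})"
    using Suc.hyps(1) by blast
  then have "add_mset a (\<mu> - {#a#}) \<in> Borel n (add_mset b (m - {#b#}))"
    using ab am bm Suc.prems by (intro Borel_add_mset_mono) auto
  then show ?case using am bm by simp
qed

lemma Borel_iff:
  "set_mset m \<subseteq> {1..n} \<Longrightarrow> \<mu> \<in> Borel n m \<longleftrightarrow> set_mset \<mu> \<subseteq> {1..n} \<and> dominates \<mu> m"
  using Borel_imp_dominates dominates_imp_Borel by blast

lemma Borel_subset_monomials: "Borel n m \<subseteq> monomials n"
  using Borel_imp_dominates by (auto simp: monomials_def)

lemma mingens_subset: "mingens I \<subseteq> I"
  unfolding mingens_def by auto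

lemma dominates_diff_Max:
  assumes "dominates u m" "size m < size u" "t \<in># u" "\<forall>x\<in>#u. x \<le> t"
  shows "dominates (u - {#t#}) m"
  unfolding dominates_def
proof
  fix j
  show "count_le m j \<le> count_le (u - {#t#}) j"
  proof (cases "t \<le> j")
    case True
    then have "count_le u j = size u" using assms(4) count_le_eq_size_iff by force
    then show ?thesis
      using count_le_diff_single[OF assms(3), of j] True assms(2) count_le_le_size[of m j] by simp
  next
    case False
    then show ?thesis
      using count_le_diff_single[OF assms(3), of j] assms(1) by (simp add: dominates_def)
  qed
qed

lemma Borel_diff_Max:
  assumes "set_mset m \<subseteq> {1..n}" "u \<in> Borel n m" "size m < size u"
    "t \<in># u" "\<forall>x\<in>#u. x \<le> t"
  shows "u - {#t#} \<in> Borel n m"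
proof -
  have "set_mset u \<subseteq> {1..n}" "dominates u m"
    using Borel_imp_dominates[OF assms(2)] by auto
  then have "set_mset (u - {#t#}) \<subseteq> {1..n}" "dominates (u - {#t#}) m"
    using dominates_diff_Max assms(3-5) by (auto dest: in_diffD)
  then show ?thesis using dominates_imp_Borel[OF assms(1)] by blast
qed

lemma mingens_Borel:
  assumes "set_mset m \<subseteq> {1..n}"
  shows "mingens (Borel n m) = {g. set_mset g \<subseteq> {1..n} \<and> dominates g m \<and> size g = size m}"
proof (intro set_eqI iffI)
  fix g assume g: "g \<in> mingens (Borel n m)"
  then have gB: "g \<in> Borel n m" and g_min: "\<forall>\<nu>\<in>Borel n m. \<nu> \<subseteq># g \<longrightarrow> \<nu> = g"
    by (auto simp: mingens_def)
  have dom: "set_mset g \<subseteq> {1..n}" "dominates g m"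
    using Borel_imp_dominates[OF gB] by auto
  have "size g = size m"
  proof (rule ccontr)
    assume "size g \<noteq> size m"
    then have "size m < size g"
      using dominates_size_le[OF assms dom] by simp
    then have "g \<noteq> {#}" by auto
    define t where "t = Max (set_mset g)"
    have "t \<in># g" "\<forall>x\<in>#g. x \<le> t"
      using \<open>g \<noteq> {#}\<close> by (auto simp: t_def)
    then have "g - {#t#} \<in> Borel n m"
      using Borel_diff_Max[OF assms gB \<open>size m < size g\<close>] by blast
    with g_min have "g - {#t#} = g" by simp
    then have "size (g - {#t#}) = size g" by simp
    with \<open>t \<in># g\<close> \<open>g \<noteq> {#}\<close> show False by (simp add: size_Diff_singleton nonempty_has_size)
  qed
  with dom show "g \<in> {g. set_mset g \<subseteq> {1..n} \<and> dominates g m \<and> size g = size m}" by simp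
next
  fix g assume g: "g \<in> {g. set_mset g \<subseteq> {1..n} \<and> dominates g m \<and> size g = size m}"
  have "\<nu> = g" if "\<nu> \<in> Borel n m" "\<nu> \<subseteq># g" for \<nu>
  proof (rule ccontr)
    assume "\<nu> \<noteq> g"
    then have "size \<nu> < size g"
      using that(2) by (simp add: mset_subset_size subset_mset.le_neq_trans)
    moreover have "size m \<le> size \<nu>"
      using Borel_imp_dominates[OF that(1)] dominates_size_le[OF assms] by blast
    ultimately show False using g by simp
  qed
  moreover have "g \<in> Borel n m"
    using g Borel_iff[OF assms] by simp
  ultimately show "g \<in> mingens (Borel n m)"
    unfolding mingens_def by blast
qed

lemma Borel_diff_Max_if_not_mingens:
  assumes "set_mset m \<subseteq> {1..n}" "u \<in> Borel n m" "u \<notin> mingens (Borel n m)"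
    "t \<in># u" "\<forall>x\<in>#u. x \<le> t"
  shows "u - {#t#} \<in> Borel n m"
proof -
  have u: "set_mset u \<subseteq> {1..n}" "dominates u m"
    using Borel_imp_dominates[OF assms(2)] by auto
  then have "size u \<noteq> size m"
    using assms(3) unfolding mingens_Borel[OF assms(1)] by blast
  then have "size m < size u"
    using dominates_size_le[OF assms(1) u] by simp
  then show ?thesis using Borel_diff_Max assms by blast
qed

lemma finite_mingens_Borel:
  assumes "set_mset \<mu> \<subseteq> {1..n}"
  shows "finite (mingens (Borel n \<mu>))"
proof -
  have "mingens (Borel n \<mu>) \<subseteq> multisets_of_size {1..n} (size \<mu>)"
    unfolding mingens_Borel[OF assms] multisets_of_size_def by auto
  then show ?thesis
    using finite_multisets_of_size[of "{1..n}"] by (blast intro: finite_subset)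
qed

section \<open>The Koszul complex in a fixed multidegree\<close>

global_interpretation fun_space: vector_space "\<lambda>(r::'a::field) (f::'b \<Rightarrow> 'a) x. r * f x"
  by unfold_locales (auto simp: fun_eq_iff algebra_simps)

lemma sum_fun_apply: "(\<Sum>x\<in>A. (f x :: 'b \<Rightarrow> 'c::comm_monoid_add)) G = (\<Sum>x\<in>A. f x G)"
  by (induction A rule: infinite_finite_induct) auto

lemma fun_space_dim_eq_card:
  fixes U :: "('b \<Rightarrow> 'a::field) set" and P :: "'b set"
  assumes fin: "finite P" and sub: "fun_space.subspace U"
    and inj: "\<And>u. u \<in> U \<Longrightarrow> (\<forall>G\<in>P. u G = 0) \<Longrightarrow> u = 0"
    and surj: "\<And>G. G \<in> P \<Longrightarrow> \<exists>u\<in>U. \<forall>G'\<in>P. u G' = (if G' = G then 1 else 0)"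
  shows "fun_space.dim U = card P"
proof -
  obtain b where b: "\<And>G. G \<in> P \<Longrightarrow> b G \<in> U \<and> (\<forall>G'\<in>P. b G G' = (if G' = G then 1 else 0))"
    using surj by metis
  have b_inj: "inj_on b P"
  proof (rule inj_onI)
    fix G G' assume "G \<in> P" "G' \<in> P" "b G = b G'"
    then show "G = G'" using b[of G] b[of G'] by (metis (full_types) zero_neq_one)
  qed
  have coord: "(\<Sum>G'\<in>P. f G' * b G' G) = f G" if "G \<in> P" for f :: "'b \<Rightarrow> 'a" and G
  proof -
    have "(\<Sum>G'\<in>P. f G' * b G' G) = (\<Sum>G'\<in>P. if G' = G then f G else 0)"
      using b that by (intro sum.cong) auto
    then show ?thesis using fin that by simp
  qed
  have ind: "fun_space.independent (b ` P)"
  proof (rule fun_space.independent_if_scalars_zero)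
    fix f :: "('b \<Rightarrow> 'a) \<Rightarrow> 'a" and x
    assume s: "(\<Sum>x\<in>b ` P. (\<lambda>y. f x * x y)) = 0" and "x \<in> b ` P"
    then obtain G where G: "G \<in> P" "x = b G" by auto
    have "0 = (\<Sum>y\<in>b ` P. f y * y G)"
      using fun_cong[OF s, of G] by (simp add: sum_fun_apply)
    also have "\<dots> = f (b G)"
      using coord[OF G(1), of "f \<circ> b"] b_inj by (simp add: sum.reindex)
    finally show "f x = 0" using G by simp
  qed (use fin in simp)
  have span: "U \<subseteq> fun_space.span (b ` P)"
  proof
    fix u assume u: "u \<in> U"
    define v where "v = (\<Sum>G\<in>P. (\<lambda>y. u G * b G y))"
    have "v \<in> fun_space.span (b ` P)" unfolding v_def
      by (intro fun_space.span_sum fun_space.span_scale fun_space.span_base) auto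
    moreover have "u - v = 0"
    proof (rule inj)
      show "u - v \<in> U" unfolding v_def
        using b u by (intro fun_space.subspace_diff[OF sub] fun_space.subspace_sum[OF sub]
            fun_space.subspace_scale[OF sub]) auto
      show "\<forall>G\<in>P. (u - v) G = 0"
        using coord[of _ u] by (simp add: v_def sum_fun_apply)
    qed
    ultimately show "u \<in> fun_space.span (b ` P)" by simp
  qed
  have "b ` P \<subseteq> U" using b by auto
  then have "fun_space.dim U = card (b ` P)"
    using fun_space.basis_card_eq_dim[OF _ span ind] by simp
  then show ?thesis using b_inj by (simp add: card_image)
qed

lemma kface_memD:
  assumes "F \<in> kface n I \<alpha> i"
  shows "F \<subseteq> {1..n}" "finite F" "card F = i" "mset_set F \<subseteq># \<alpha>" "\<alpha> - mset_set F \<in> I"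
  using assms unfolding kface_def by (auto intro: finite_subset)

lemma finite_kface: "finite (kface n I \<alpha> i)"
  by (rule finite_subset[of _ "Pow {1..n}"]) (auto simp: kface_def)

lemma mset_set_subset_iff:
  assumes "finite F"
  shows "mset_set F \<subseteq># \<alpha> \<longleftrightarrow> F \<subseteq> set_mset \<alpha>"
proof
  assume "mset_set F \<subseteq># \<alpha>"
  then show "F \<subseteq> set_mset \<alpha>" using set_mset_mono assms by fastforce
next
  assume "F \<subseteq> set_mset \<alpha>"
  then have "mset_set F \<subseteq># mset_set (set_mset \<alpha>)"
    by (rule subset_imp_msubset_mset_set) simp
  then show "mset_set F \<subseteq># \<alpha>"
    using mset_set_set_mset_msubset by (rule subset_mset.order_trans)
qed

definition mult_closed :: "nat \<Rightarrow> mon set \<Rightarrow> bool" where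
  "mult_closed n I \<longleftrightarrow> (\<forall>\<nu>\<in>I. \<forall>c\<in>{1..n}. add_mset c \<nu> \<in> I)"

lemma mult_closed_Borel: "mult_closed n (Borel n \<mu>)"
  unfolding mult_closed_def using Borel_add_mset by blast

lemma kface_remove:
  assumes F: "F \<in> kface n I \<alpha> (Suc i)" and j: "j \<in> F"
    and I: "mult_closed n I"
  shows "F - {j} \<in> kface n I \<alpha> i"
proof -
  note F' = kface_memD[OF F]
  have M: "mset_set F = add_mset j (mset_set (F - {j}))"
    using F'(2) j by (rule mset_set.remove)
  have "\<alpha> - mset_set (F - {j}) = add_mset j (\<alpha> - mset_set F)"
  proof (rule multiset_eqI)
    fix x
    show "count (\<alpha> - mset_set (F - {j})) x = count (add_mset j (\<alpha> - mset_set F)) x"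
      using F'(4) M by (auto simp: subseteq_mset_def dest: spec[of _ x])
  qed
  then have "\<alpha> - mset_set (F - {j}) \<in> I"
    using I F'(1,5) j by (auto simp: mult_closed_def)
  moreover have "mset_set (F - {j}) \<subseteq># \<alpha>"
    using F'(4) M by (simp add: mset_subset_eq_insertD subset_mset.less_imp_le)
  ultimately show ?thesis
    using F'(1-3) j unfolding kface_def by auto
qed

lemma kface_insert:
  assumes G: "G \<in> kface n I \<alpha> i" and t: "t \<notin> G" "t \<in># \<alpha>" "t \<in> {1..n}"
    and u: "\<alpha> - add_mset t (mset_set G) \<in> I"
  shows "insert t G \<in> kface n I \<alpha> (Suc i)"
proof -
  note G' = kface_memD[OF G]
  have "mset_set (insert t G) \<subseteq># \<alpha>"
    using G'(2,4) t(2) by (subst mset_set_subset_iff) (auto simp: mset_set_subset_iff)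
  then show ?thesis
    using G' t u unfolding kface_def by auto
qed

lemma kface_insertD:
  assumes "insert t G \<in> kface n I \<alpha> (Suc i)" "t \<notin> G"
  shows "\<alpha> - add_mset t (mset_set G) \<in> I"
  using kface_memD[OF assms(1)] assms(2) by (simp add: finite_insert)

lemma kdiff_0 [simp]: "kdiff n I \<alpha> 0 c = 0"
  by (rule ext) (simp add: kdiff_def)

lemma kdiff_Suc:
  "G \<in> kface n I \<alpha> i \<Longrightarrow> kdiff n I \<alpha> (Suc i) c G =
    (\<Sum>j\<in>{1..n} - G. if insert j G \<in> kface n I \<alpha> (Suc i)
      then ksign j (insert j G) * c (insert j G) else 0)"
  by (simp add: kdiff_def)

lemma kdiff_Suc_not_kface: "G \<notin> kface n I \<alpha> i \<Longrightarrow> kdiff n I \<alpha> (Suc i) c G = 0"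
  by (simp add: kdiff_def)

lemma kdiff_module_hom:
  "module_hom (\<lambda>(r::'a::field) f x. r * f x) (\<lambda>r f x. r * f x) (kdiff n I \<alpha> i)"
  unfolding module_hom_iff
  by (auto simp: fun_space.module_axioms kdiff_def fun_eq_iff sum.distrib[symmetric]
      sum_distrib_left distrib_left mult.left_commute intro!: sum.cong)

lemmas kdiff_diff = module_hom.diff[OF kdiff_module_hom]
  and kdiff_zero = module_hom.zero[OF kdiff_module_hom]

lemma subspace_kchains: "fun_space.subspace (kchains n I \<alpha> i)"
  unfolding fun_space.subspace_def kchains_def by auto

lemma kdiff_in_kchains: "kdiff n I \<alpha> (Suc i) c \<in> kchains n I \<alpha> i"
  unfolding kchains_def by (auto simp: kdiff_Suc_not_kface)

lemma ksign_square [simp]: "ksign j F * ksign j F = (1::'a::field)"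
  by (simp add: ksign_def power_mult_distrib[symmetric])

lemma ksign_nonzero [simp]: "ksign j F \<noteq> (0::'a::field)"
  by (simp add: ksign_def)

lemma ksign_swap:
  assumes "j < l" "j \<notin> K" "finite K"
  shows "ksign j (insert j (insert l K)) * ksign l (insert l K)
    = - (ksign l (insert l (insert j K)) * ksign j (insert j K) :: 'a::field)"
proof -
  have "{x \<in> insert l (insert j K). x < l} = insert j {x \<in> K. x < l}"
    "{x \<in> insert j K. x < j} = {x \<in> K. x < j}"
    "{x \<in> insert j (insert l K). x < j} = {x \<in> K. x < j}"
    "{x \<in> insert l K. x < l} = {x \<in> K. x < l}"
    using assms(1) by auto
  then show ?thesis using assms(2,3) by (simp add: ksign_def)
qed

lemma sum_off_diagonal_antisym:
  fixes g :: "'a::linorder \<Rightarrow> 'a \<Rightarrow> 'b::ab_group_add"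
  assumes fin: "finite A" and anti: "\<And>j l. j \<in> A \<Longrightarrow> l \<in> A \<Longrightarrow> j < l \<Longrightarrow> g l j = - g j l"
  shows "(\<Sum>j\<in>A. \<Sum>l\<in>A - {j}. g j l) = 0"
proof -
  have split: "(\<Sum>l\<in>A - {j}. g j l) = (\<Sum>l\<in>{l\<in>A. j < l}. g j l) + (\<Sum>l\<in>{l\<in>A. l < j}. g j l)" for j
  proof -
    have "A - {j} = {l\<in>A. j < l} \<union> {l\<in>A. l < j}" by auto
    moreover have "(\<Sum>l\<in>{l\<in>A. j < l} \<union> {l\<in>A. l < j}. g j l)
        = (\<Sum>l\<in>{l\<in>A. j < l}. g j l) + (\<Sum>l\<in>{l\<in>A. l < j}. g j l)"
      by (rule sum.union_disjoint) (use fin in auto)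
    ultimately show ?thesis by simp
  qed
  have "(\<Sum>j\<in>A. \<Sum>l\<in>A - {j}. g j l)
      = (\<Sum>j\<in>A. \<Sum>l\<in>{l\<in>A. j < l}. g j l) + (\<Sum>j\<in>A. \<Sum>l\<in>{l\<in>A. l < j}. g j l)"
    by (simp add: split sum.distrib)
  also have "(\<Sum>j\<in>A. \<Sum>l\<in>{l\<in>A. l < j}. g j l) = (\<Sum>j\<in>A. \<Sum>l\<in>{l\<in>A. j < l}. g l j)"
    by (rule sum.swap_restrict[OF fin fin])
  also have "(\<Sum>j\<in>A. \<Sum>l\<in>{l\<in>A. j < l}. g j l) + \<dots> = (\<Sum>j\<in>A. \<Sum>l\<in>{l\<in>A. j < l}. g j l + g l j)"
    by (simp add: sum.distrib)
  also have "\<dots> = 0"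
    using anti by (intro sum.neutral ballI) auto
  finally show ?thesis .
qed

lemma kdiff_kdiff:
  assumes I: "mult_closed n I"
  shows "kdiff n I \<alpha> i (kdiff n I \<alpha> (Suc i) c) = (0 :: nat set \<Rightarrow> 'a::field)"
proof (cases i)
  case (Suc i')
  have "kdiff n I \<alpha> (Suc i') (kdiff n I \<alpha> (Suc (Suc i')) c) K = 0" for K
  proof (cases "K \<in> kface n I \<alpha> i'")
    case K: True
    define \<Phi> where "\<Phi> = kface n I \<alpha>"
    define A where "A = {1..n} - K"
    define g where "g j l = (if insert l (insert j K) \<in> \<Phi> (Suc (Suc i'))
        then ksign l (insert l (insert j K)) * ksign j (insert j K) * c (insert l (insert j K))
        else 0)" for j l
    have inner: "(if insert j K \<in> \<Phi> (Suc i')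
        then ksign j (insert j K) * kdiff n I \<alpha> (Suc (Suc i')) c (insert j K) else 0)
        = (\<Sum>l\<in>A - {j}. g j l)" if "j \<in> A" for j
    proof (cases "insert j K \<in> \<Phi> (Suc i')")
      case True
      have "{1..n} - insert j K = A - {j}" unfolding A_def by auto
      then show ?thesis
        using kdiff_Suc[of "insert j K" n I \<alpha> "Suc i'" c] True
        by (simp add: \<Phi>_def g_def sum_distrib_left mult_ac if_distrib cong: if_cong)
    next
      case False
      have "g j l = 0" if "l \<in> A - {j}" for l
      proof -
        have "insert l (insert j K) \<notin> \<Phi> (Suc (Suc i'))"
        proof
          assume "insert l (insert j K) \<in> \<Phi> (Suc (Suc i'))"
          from kface_remove[OF this[unfolded \<Phi>_def] insertI1 I]
          have "insert l (insert j K) - {l} \<in> \<Phi> (Suc i')" by (simp add: \<Phi>_def)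
          moreover have "insert l (insert j K) - {l} = insert j K"
            using that \<open>j \<in> A\<close> by (auto simp: A_def)
          ultimately show False using False by simp
        qed
        then show ?thesis by (simp add: g_def)
      qed
      then show ?thesis using False by simp
    qed
    have anti: "g l j = - g j l" if "j \<in> A" "l \<in> A" "j < l" for j l
      using that ksign_swap[of j l K, where 'a='a] kface_memD(2)[OF K]
      by (simp add: g_def A_def insert_commute)
    have "kdiff n I \<alpha> (Suc i') (kdiff n I \<alpha> (Suc (Suc i')) c) K
        = (\<Sum>j\<in>A. if insert j K \<in> \<Phi> (Suc i')
            then ksign j (insert j K) * kdiff n I \<alpha> (Suc (Suc i')) c (insert j K) else 0)"
      using kdiff_Suc[OF K] by (simp add: A_def \<Phi>_def)
    also have "\<dots> = (\<Sum>j\<in>A. \<Sum>l\<in>A - {j}. g j l)"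
      using inner by (rule sum.cong[OF refl])
    also have "\<dots> = 0"
      using anti by (intro sum_off_diagonal_antisym) (auto simp: A_def)
    finally show ?thesis .
  qed (simp add: kdiff_Suc_not_kface)
  then show ?thesis using Suc by (simp add: fun_eq_iff)
qed simp

section \<open>Homology of a principal Borel ideal in a fixed multidegree\<close>

lemma maxvar_in: "\<alpha> \<noteq> {#} \<Longrightarrow> maxvar \<alpha> \<in># \<alpha>"
  unfolding maxvar_def by simp

lemma le_maxvar: "x \<in># \<alpha> \<Longrightarrow> x \<le> maxvar \<alpha>"
  unfolding maxvar_def by simp

definition kchains_through :: "nat \<Rightarrow> mon set \<Rightarrow> mon \<Rightarrow> nat \<Rightarrow> nat \<Rightarrow> (nat set \<Rightarrow> 'a::field) set" where
  "kchains_through n I \<alpha> i t = {x \<in> kchains n I \<alpha> i. \<forall>H. t \<notin> H \<longrightarrow> x H = 0}"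

lemma kdiff_Suc_through:
  assumes x: "\<forall>H. t \<notin> H \<longrightarrow> x H = 0" and G: "G \<in> kface n I \<alpha> i" "t \<notin> G"
  shows "kdiff n I \<alpha> (Suc i) x G = (if insert t G \<in> kface n I \<alpha> (Suc i)
           then ksign t (insert t G) * x (insert t G) else 0)"
proof -
  have "kdiff n I \<alpha> (Suc i) x G = (\<Sum>j\<in>{1..n} - G. if j = t \<and> insert t G \<in> kface n I \<alpha> (Suc i)
      then ksign t (insert t G) * x (insert t G) else 0)"
    unfolding kdiff_Suc[OF G(1)] using x G(2) by (intro sum.cong) auto
  also have "\<dots> = (if insert t G \<in> kface n I \<alpha> (Suc i)
      then ksign t (insert t G) * x (insert t G) else 0)"
    using kface_memD(1)[of "insert t G" n I \<alpha> "Suc i"] G(2) by (auto simp: sum.delta)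
  finally show ?thesis .
qed

lemma kchains_through_kdiff_eq_0:
  assumes I: "mult_closed n I"
    and x: "x \<in> kchains_through n I \<alpha> i t" and dx: "kdiff n I \<alpha> i x = 0"
  shows "x = 0"
proof
  fix H
  have x_face: "\<forall>F. F \<notin> kface n I \<alpha> i \<longrightarrow> x F = 0" and x_t: "\<forall>H. t \<notin> H \<longrightarrow> x H = 0"
    using x by (auto simp: kchains_through_def kchains_def)
  show "x H = 0 H"
  proof (cases "H \<in> kface n I \<alpha> i \<and> t \<in> H")
    case True
    then obtain i' where i: "i = Suc i'"
      using kface_memD(2,3)[of H n I \<alpha> i] by (cases i) auto
    define G where "G = H - {t}"
    have G: "G \<in> kface n I \<alpha> i'" "t \<notin> G" "insert t G = H"
      using kface_remove[of H n I \<alpha> i' t, OF _ _ I] True i by (auto simp: G_def)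
    have "ksign t H * x H = 0"
      using kdiff_Suc_through[OF x_t G(1,2)] G(3) True dx i by simp
    then show ?thesis by simp
  qed (use x_face x_t in auto)
qed

context
  fixes n :: nat and \<mu> \<alpha> :: mon
  assumes mu: "set_mset \<mu> \<subseteq> {1..n}" and al: "set_mset \<alpha> \<subseteq> {1..n}"
begin

text \<open>Replacing \<open>x\<^sub>t\<close> by \<open>x\<^sub>j\<close> (\<open>j < t\<close>) in \<open>\<alpha> / (x\<^sub>j x\<^sub>G)\<close> is a Borel move.\<close>

lemma kface_insert_maxvar:
  assumes G: "G \<in> kface n (Borel n \<mu>) \<alpha> i" "maxvar \<alpha> \<notin> G" and j: "j \<notin> G" "j \<noteq> maxvar \<alpha>"
    and J: "insert j G \<in> kface n (Borel n \<mu>) \<alpha> (Suc i)"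
  shows "insert (maxvar \<alpha>) G \<in> kface n (Borel n \<mu>) \<alpha> (Suc i)"
proof -
  define t where "t = maxvar \<alpha>"
  define MG where "MG = mset_set G"
  note G' = kface_memD[OF G(1)] and J' = kface_memD[OF J]
  have ja: "j \<in># \<alpha>" using J'(2,4) by (simp add: mset_set_subset_iff)
  then have "\<alpha> \<noteq> {#}" by auto
  then have ta: "t \<in># \<alpha>" and jt: "j < t"
    using maxvar_in[of \<alpha>] le_maxvar[OF ja] j(2) by (auto simp: t_def)
  define u where "u = \<alpha> - add_mset j MG"
  have u: "u \<in> Borel n \<mu>"
    using kface_insertD[OF J j(1)] by (simp add: u_def MG_def)
  have MGt: "count MG t = 0" using G'(2) G(2) by (simp add: MG_def t_def)
  have subj: "add_mset j MG \<subseteq># \<alpha>" using J'(2,4) j(1) by (simp add: MG_def)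
  have "t \<in># u" using MGt jt ta by (simp add: u_def flip: count_greater_zero_iff)
  from Borel.move[OF u this _ jt] have "u - {#t#} + {#j#} \<in> Borel n \<mu>"
    using ja al by auto
  moreover have "u - {#t#} + {#j#} = \<alpha> - add_mset t MG"
  proof (rule multiset_eqI)
    fix x
    show "count (u - {#t#} + {#j#}) x = count (\<alpha> - add_mset t MG) x"
      using subj MGt jt ta unfolding u_def subseteq_mset_def
      by (cases "x = t"; cases "x = j") (auto dest: spec[of _ x])
  qed
  ultimately show ?thesis
    using kface_insert[OF G(1)] G(2) ta al by (auto simp: t_def MG_def)
qed

lemma insert_maxvar_kface_iff:
  assumes "\<alpha> \<noteq> {#}" and G: "G \<in> kface n (Borel n \<mu>) \<alpha> i" "maxvar \<alpha> \<notin> G"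
  shows "insert (maxvar \<alpha>) G \<in> kface n (Borel n \<mu>) \<alpha> (Suc i) \<longleftrightarrow>
         \<alpha> - mset_set G \<notin> mingens (Borel n \<mu>)"
proof -
  define t where "t = maxvar \<alpha>"
  define MG where "MG = mset_set G"
  have ta: "t \<in># \<alpha>" using maxvar_in assms(1) by (simp add: t_def)
  have MGt: "count MG t = 0" using kface_memD(2)[OF G(1)] G(2) by (simp add: MG_def t_def)
  have u: "\<alpha> - MG \<in> Borel n \<mu>" using kface_memD(5)[OF G(1)] by (simp add: MG_def)
  have tu: "t \<in># \<alpha> - MG" using MGt ta by (simp flip: count_greater_zero_iff)
  show ?thesis
  proof
    assume "insert (maxvar \<alpha>) G \<in> kface n (Borel n \<mu>) \<alpha> (Suc i)"
    then have "\<alpha> - add_mset t MG \<in> Borel n \<mu>"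
      using kface_insertD G(2) by (simp add: t_def MG_def)
    moreover have "\<alpha> - add_mset t MG \<subseteq># \<alpha> - MG"
      by (auto simp: subseteq_mset_def)
    moreover have "\<alpha> - add_mset t MG \<noteq> \<alpha> - MG"
    proof
      assume "\<alpha> - add_mset t MG = \<alpha> - MG"
      then have "count (\<alpha> - add_mset t MG) t = count (\<alpha> - MG) t" by simp
      then have "count \<alpha> t - Suc 0 = count \<alpha> t"
        using MGt by simp
      moreover have "0 < count \<alpha> t" using ta by simp
      ultimately show False by linarith
    qed
    ultimately show "\<alpha> - mset_set G \<notin> mingens (Borel n \<mu>)"
      unfolding mingens_def MG_def by blast
  next
    assume "\<alpha> - mset_set G \<notin> mingens (Borel n \<mu>)"
    moreover have "\<forall>x\<in>#\<alpha> - MG. x \<le> t"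
      by (auto simp: t_def intro: le_maxvar dest: in_diffD)
    ultimately have "\<alpha> - MG - {#t#} \<in> Borel n \<mu>"
      using Borel_diff_Max_if_not_mingens[OF mu u _ tu] by (simp add: MG_def)
    then show "insert (maxvar \<alpha>) G \<in> kface n (Borel n \<mu>) \<alpha> (Suc i)"
      using kface_insert[OF G] ta al by (auto simp: t_def MG_def)
  qed
qed

text \<open>The chain \<open>x\<close> is chosen so that \<open>d x\<close> agrees with \<open>d c\<close> on the faces avoiding \<open>t\<close>;
  then \<open>d c - d x\<close> is a cycle supported on faces through \<open>t\<close>, hence zero.\<close>

lemma kdiff_eq_kdiff_through:
  fixes c :: "nat set \<Rightarrow> 'a::field"
  assumes c: "c \<in> kchains n (Borel n \<mu>) \<alpha> (Suc i)"
  defines "d \<equiv> kdiff n (Borel n \<mu>) \<alpha> (Suc i)"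
  shows "\<exists>x\<in>kchains_through n (Borel n \<mu>) \<alpha> (Suc i) (maxvar \<alpha>). d x = d c"
proof -
  define \<Phi> where "\<Phi> = kface n (Borel n \<mu>) \<alpha>"
  define t where "t = maxvar \<alpha>"
  define x where "x H = (if H \<in> \<Phi> (Suc i) \<and> t \<in> H then ksign t H * d c (H - {t}) else 0)" for H
  have x: "x \<in> kchains_through n (Borel n \<mu>) \<alpha> (Suc i) t"
    unfolding kchains_through_def kchains_def x_def \<Phi>_def by auto
  then have x_t: "\<forall>H. t \<notin> H \<longrightarrow> x H = 0"
    by (simp add: kchains_through_def)
  define e where "e = d c - d x"
  have "e G = 0" if tG: "t \<notin> G" for G
  proof (cases "G \<in> \<Phi> i")
    case G: True
    have dx: "d x G = (if insert t G \<in> \<Phi> (Suc i) then ksign t (insert t G) * x (insert t G) else 0)"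
      unfolding d_def \<Phi>_def using kdiff_Suc_through[OF x_t G[unfolded \<Phi>_def] tG] .
    show ?thesis
    proof (cases "insert t G \<in> \<Phi> (Suc i)")
      case True
      then have "x (insert t G) = ksign t (insert t G) * d c G"
        using tG by (simp add: x_def)
      then show ?thesis using dx True by (simp add: e_def mult.assoc[symmetric])
    next
      case False
      have "insert j G \<notin> \<Phi> (Suc i)" if "j \<in> {1..n} - G" for j
        using kface_insert_maxvar[of G i j] G tG False that by (auto simp: \<Phi>_def t_def)
      then have "d c G = 0"
        unfolding d_def kdiff_Suc[OF G[unfolded \<Phi>_def]] by (simp add: \<Phi>_def)
      then show ?thesis using dx False by (simp add: e_def)
    qed
  qed (simp add: e_def d_def \<Phi>_def kdiff_Suc_not_kface)
  moreover have "e \<in> kchains n (Borel n \<mu>) \<alpha> i"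
    unfolding e_def d_def by (intro fun_space.subspace_diff subspace_kchains kdiff_in_kchains)
  ultimately have "e \<in> kchains_through n (Borel n \<mu>) \<alpha> i t"
    by (simp add: kchains_through_def)
  moreover have "kdiff n (Borel n \<mu>) \<alpha> i e = 0"
    by (simp add: e_def d_def kdiff_diff kdiff_kdiff[OF mult_closed_Borel])
  ultimately have "e = 0"
    by (rule kchains_through_kdiff_eq_0[OF mult_closed_Borel])
  then show ?thesis using x by (auto simp: e_def t_def)
qed

lemma dim_kdiff_kernel:
  "fun_space.dim {c \<in> kchains n (Borel n \<mu>) \<alpha> i. kdiff n (Borel n \<mu>) \<alpha> i c = (0 :: nat set \<Rightarrow> 'a::field)}
    = card {G \<in> kface n (Borel n \<mu>) \<alpha> i. maxvar \<alpha> \<notin> G}"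
proof (rule fun_space_dim_eq_card)
  let ?Z = "{c \<in> kchains n (Borel n \<mu>) \<alpha> i. kdiff n (Borel n \<mu>) \<alpha> i c = (0 :: nat set \<Rightarrow> 'a)}"
  have "?Z = kchains n (Borel n \<mu>) \<alpha> i \<inter> {c. kdiff n (Borel n \<mu>) \<alpha> i c = 0}" by blast
  then show "fun_space.subspace ?Z"
    using fun_space.subspace_inter[OF subspace_kchains module_hom.subspace_kernel[OF kdiff_module_hom]]
    by simp
  show "u = 0" if "u \<in> ?Z" "\<forall>G\<in>{G \<in> kface n (Borel n \<mu>) \<alpha> i. maxvar \<alpha> \<notin> G}. u G = 0" for u
  proof (rule kchains_through_kdiff_eq_0[OF mult_closed_Borel])
    show "u \<in> kchains_through n (Borel n \<mu>) \<alpha> i (maxvar \<alpha>)"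
      using that by (auto simp: kchains_through_def kchains_def)
  qed (use that in simp)
  fix G assume G: "G \<in> {G \<in> kface n (Borel n \<mu>) \<alpha> i. maxvar \<alpha> \<notin> G}"
  define r :: "nat set \<Rightarrow> 'a" where "r H = (if H = G then 1 else 0)" for H
  have r: "r \<in> kchains n (Borel n \<mu>) \<alpha> i"
    using G by (auto simp: kchains_def r_def)
  show "\<exists>u\<in>?Z. \<forall>G'\<in>{G \<in> kface n (Borel n \<mu>) \<alpha> i. maxvar \<alpha> \<notin> G}. u G' = (if G' = G then 1 else 0)"
  proof (cases i)
    case 0
    then show ?thesis using r by (intro bexI[of _ r]) (auto simp: r_def)
  next
    case (Suc i')
    then obtain x where x: "x \<in> kchains_through n (Borel n \<mu>) \<alpha> i (maxvar \<alpha>)"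
        "kdiff n (Borel n \<mu>) \<alpha> i x = kdiff n (Borel n \<mu>) \<alpha> i r"
      using kdiff_eq_kdiff_through[of r i'] r by auto
    then have "r - x \<in> ?Z"
      using r by (auto simp: kdiff_diff kchains_through_def intro: fun_space.subspace_diff[OF subspace_kchains])
    then show ?thesis
      using x(1) by (intro bexI[of _ "r - x"]) (auto simp: r_def kchains_through_def)
  qed
qed (rule finite_subset[OF _ finite_kface], auto)

lemma dim_kdiff_image:
  "fun_space.dim (kdiff n (Borel n \<mu>) \<alpha> (Suc i) ` (kchains n (Borel n \<mu>) \<alpha> (Suc i) :: (nat set \<Rightarrow> 'a::field) set))
    = card {G \<in> kface n (Borel n \<mu>) \<alpha> i. maxvar \<alpha> \<notin> G \<and> insert (maxvar \<alpha>) G \<in> kface n (Borel n \<mu>) \<alpha> (Suc i)}"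
proof (rule fun_space_dim_eq_card)
  define t where "t = maxvar \<alpha>"
  let ?d = "kdiff n (Borel n \<mu>) \<alpha> (Suc i) :: (nat set \<Rightarrow> 'a) \<Rightarrow> _"
  let ?Y = "{G \<in> kface n (Borel n \<mu>) \<alpha> i. maxvar \<alpha> \<notin> G \<and> insert (maxvar \<alpha>) G \<in> kface n (Borel n \<mu>) \<alpha> (Suc i)}"
  show "fun_space.subspace (?d ` (kchains n (Borel n \<mu>) \<alpha> (Suc i) :: (nat set \<Rightarrow> 'a) set))"
    using module_hom.subspace_image[OF kdiff_module_hom subspace_kchains] .
  show "u = 0" if u: "u \<in> ?d ` kchains n (Borel n \<mu>) \<alpha> (Suc i)" and Y: "\<forall>G\<in>?Y. u G = 0"
    for u :: "nat set \<Rightarrow> 'a"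
  proof -
    obtain c where c: "c \<in> kchains n (Borel n \<mu>) \<alpha> (Suc i)" "u = ?d c"
      using u by blast
    obtain x where x: "x \<in> kchains_through n (Borel n \<mu>) \<alpha> (Suc i) t" "u = ?d x"
      using kdiff_eq_kdiff_through[OF c(1)] c(2) unfolding t_def by metis
    have x_face: "\<forall>F. F \<notin> kface n (Borel n \<mu>) \<alpha> (Suc i) \<longrightarrow> x F = 0"
      and x_t: "\<forall>H. t \<notin> H \<longrightarrow> x H = 0"
      using x(1) by (auto simp: kchains_through_def kchains_def)
    have "x = 0"
    proof
      fix H
      show "x H = 0 H"
      proof (cases "H \<in> kface n (Borel n \<mu>) \<alpha> (Suc i) \<and> t \<in> H")
      case True
      define G where "G = H - {t}"
      have Ht: "H \<in> kface n (Borel n \<mu>) \<alpha> (Suc i)" "t \<in> H" using True by simp_all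
      have G: "G \<in> kface n (Borel n \<mu>) \<alpha> i" "t \<notin> G" "insert t G = H"
        unfolding G_def by (rule kface_remove[OF Ht mult_closed_Borel], simp, rule insert_Diff[OF Ht(2)])
      have "ksign t H * x H = u G"
        using kdiff_Suc_through[OF x_t G(1,2)] G(3) True x(2) by simp
      also have "\<dots> = 0" using Y G True by (simp add: t_def)
      finally show ?thesis by simp
    qed (use x_face x_t in auto)
    qed
    then show "u = 0" using x(2) by (simp add: kdiff_zero)
  qed
  fix G assume "G \<in> ?Y"
  then have G: "G \<in> kface n (Borel n \<mu>) \<alpha> i" "t \<notin> G" "insert t G \<in> kface n (Borel n \<mu>) \<alpha> (Suc i)"
    unfolding t_def by blast+
  define x :: "nat set \<Rightarrow> 'a" where "x H = (if H = insert t G then ksign t H else 0)" for H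
  have x_t: "\<forall>H. t \<notin> H \<longrightarrow> x H = 0" by (simp add: x_def)
  have x: "x \<in> kchains n (Borel n \<mu>) \<alpha> (Suc i)"
    using G(3) by (simp add: kchains_def x_def)
  show "\<exists>u\<in>?d ` kchains n (Borel n \<mu>) \<alpha> (Suc i). \<forall>G'\<in>?Y. u G' = (if G' = G then 1 else 0)"
  proof (rule bexI[where x="?d x"])
    show "?d x \<in> ?d ` kchains n (Borel n \<mu>) \<alpha> (Suc i)"
      using x by (rule imageI)
    show "\<forall>G'\<in>?Y. ?d x G' = (if G' = G then 1 else 0)"
    proof
      fix G' assume G'Y: "G' \<in> ?Y"
      have G': "G' \<in> kface n (Borel n \<mu>) \<alpha> i" "t \<notin> G'" "insert t G' \<in> kface n (Borel n \<mu>) \<alpha> (Suc i)"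
        using G'Y unfolding t_def by blast+
      have "?d x G' = ksign t (insert t G') * x (insert t G')"
        using kdiff_Suc_through[OF x_t G'(1,2)] G'(3) by simp
      moreover have "insert t G' = insert t G \<longleftrightarrow> G' = G"
        using G(2) G'(2) by (metis insert_ident)
      ultimately show "?d x G' = (if G' = G then 1 else 0)" by (simp add: x_def)
    qed
  qed
qed (rule finite_subset[OF _ finite_kface], auto)

lemma khomdim_Borel:
  fixes T :: "'a::field itself"
  shows "khomdim T n (Borel n \<mu>) \<alpha> i =
    card {G \<in> kface n (Borel n \<mu>) \<alpha> i. maxvar \<alpha> \<notin> G \<and> insert (maxvar \<alpha>) G \<notin> kface n (Borel n \<mu>) \<alpha> (Suc i)}"
proof -
  let ?R = "{G \<in> kface n (Borel n \<mu>) \<alpha> i. maxvar \<alpha> \<notin> G}"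
  let ?Y = "{G \<in> ?R. insert (maxvar \<alpha>) G \<in> kface n (Borel n \<mu>) \<alpha> (Suc i)}"
  have "khomdim T n (Borel n \<mu>) \<alpha> i = card ?R - card ?Y"
    unfolding khomdim_def using dim_kdiff_kernel[where 'a='a] dim_kdiff_image[where 'a='a] by simp
  also have "\<dots> = card (?R - ?Y)"
    using finite_subset[OF _ finite_kface, of ?Y] by (intro card_Diff_subset[symmetric]) auto
  also have "?R - ?Y = {G \<in> kface n (Borel n \<mu>) \<alpha> i. maxvar \<alpha> \<notin> G \<and> insert (maxvar \<alpha>) G \<notin> kface n (Borel n \<mu>) \<alpha> (Suc i)}"
    by blast
  finally show ?thesis .
qed

end

section \<open>The Eliahou--Kervaire formula for principal Borel ideals\<close>

text \<open>The largest variable index of a monomial, taken to be \<open>1\<close> for the monomial \<open>1\<close>: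
  then the empty set is its only admissible face, which accounts for \<open>b\<^sub>0(S) = 1\<close>.\<close>

definition top_index :: "mon \<Rightarrow> nat" where
  "top_index g = Max (insert 1 (set_mset g))"

lemma top_index_ge_1: "1 \<le> top_index g"
  unfolding top_index_def by (rule Max_ge) auto

lemma le_top_index: "x \<in># g \<Longrightarrow> x \<le> top_index g"
  unfolding top_index_def by (rule Max_ge) auto

lemma top_index_le: "1 \<le> l \<Longrightarrow> \<forall>x\<in>#g. x \<le> l \<Longrightarrow> top_index g \<le> l"
  unfolding top_index_def by (rule Max.boundedI) auto

lemma top_index_add_mset: "top_index g \<le> l \<Longrightarrow> top_index (add_mset l g) = l"
  using top_index_ge_1[of g] le_top_index[of _ g]
  by (intro antisym top_index_le le_top_index) force+

definition ek_symbols :: "mon set \<Rightarrow> mon \<Rightarrow> nat \<Rightarrow> nat set set" where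
  "ek_symbols I \<alpha> i = {F. mset_set F \<subseteq># \<alpha> \<and> \<alpha> - mset_set F \<in> mingens I
     \<and> F \<subseteq> {1..<top_index (\<alpha> - mset_set F)} \<and> card F = i}"

lemma finite_ek_symbols: "finite (ek_symbols I \<alpha> i)"
proof (rule finite_subset)
  show "ek_symbols I \<alpha> i \<subseteq> Pow (set_mset \<alpha>)"
  proof
    fix F assume "F \<in> ek_symbols I \<alpha> i"
    then have "finite F" "mset_set F \<subseteq># \<alpha>"
      by (auto simp: ek_symbols_def intro: finite_subset)
    then show "F \<in> Pow (set_mset \<alpha>)" using mset_set_subset_iff by blast
  qed
qed simp

lemma khomdim_Borel_eq_card_ek_symbols:
  fixes T :: "'a::field itself"
  assumes mu: "set_mset \<mu> \<subseteq> {1..n}" and al: "set_mset \<alpha> \<subseteq> {1..n}"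
  shows "khomdim T n (Borel n \<mu>) \<alpha> i = card (ek_symbols (Borel n \<mu>) \<alpha> i)"
proof -
  let ?I = "Borel n \<mu>"
  define t where "t = maxvar \<alpha>"
  have "{G \<in> kface n ?I \<alpha> i. t \<notin> G \<and> insert t G \<notin> kface n ?I \<alpha> (Suc i)} = ek_symbols ?I \<alpha> i"
  proof (cases "\<alpha> = {#}")
    case True
    have empty_iff: "mset_set F \<subseteq># {#} \<longleftrightarrow> F = {}" if "finite F" for F :: "nat set"
      using that by (simp add: mset_set_empty_iff)
    have "F \<in> kface n ?I \<alpha> i \<longleftrightarrow> F = {} \<and> i = 0 \<and> {#} \<in> ?I" for F
    proof
      assume F: "F \<in> kface n ?I \<alpha> i"
      then have "F = {}" using True empty_iff[OF kface_memD(2)[OF F]] kface_memD(4)[OF F] by simp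
      then show "F = {} \<and> i = 0 \<and> {#} \<in> ?I" using True kface_memD(3,5)[OF F] by simp
    qed (use True in \<open>simp add: kface_def\<close>)
    moreover have "F \<in> ek_symbols ?I \<alpha> i \<longleftrightarrow> F = {} \<and> i = 0 \<and> {#} \<in> ?I" for F
    proof
      assume F: "F \<in> ek_symbols ?I \<alpha> i"
      then have "finite F" unfolding ek_symbols_def using finite_subset by blast
      then have "F = {}" using True empty_iff F by (simp add: ek_symbols_def)
      then show "F = {} \<and> i = 0 \<and> {#} \<in> ?I"
        using True F mingens_subset by (auto simp: ek_symbols_def)
    next
      assume "F = {} \<and> i = 0 \<and> {#} \<in> ?I"
      moreover have "{#} \<in> ?I \<Longrightarrow> {#} \<in> mingens ?I"
        by (simp add: mingens_def)
      ultimately show "F \<in> ek_symbols ?I \<alpha> i" using True by (simp add: ek_symbols_def)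
    qed
    moreover have "insert t G \<notin> kface n ?I \<alpha> (Suc i)" for G
      using True kface_memD(2,4)[of "insert t G" n ?I "{#}"] by (auto simp: mset_set_empty_iff)
    ultimately show ?thesis by auto
  next
    case False
    have t: "t \<in># \<alpha>" "1 \<le> t" using maxvar_in[OF False] al by (auto simp: t_def)
    have face_iff: "t \<notin> F \<longleftrightarrow> F \<subseteq> {1..<top_index (\<alpha> - mset_set F)}"
      if F: "F \<in> kface n ?I \<alpha> i" for F
    proof -
      note F' = kface_memD[OF F]
      have top: "top_index (\<alpha> - mset_set F) \<le> t"
        using t(2) by (auto intro!: top_index_le dest: in_diffD simp: t_def le_maxvar)
      have Fa: "F \<subseteq> set_mset \<alpha>"
        using F'(2,4) mset_set_subset_iff by blast
      show ?thesis
      proof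
        assume "t \<notin> F"
        then have "count (\<alpha> - mset_set F) t = count \<alpha> t"
          using F'(2) by simp
        then have "t \<le> top_index (\<alpha> - mset_set F)"
          using t(1) le_top_index by (metis count_greater_zero_iff)
        moreover have "x < t" if "x \<in> F" for x
        proof -
          have "x \<le> t" using Fa that le_maxvar[of x \<alpha>] by (auto simp: t_def)
          with \<open>t \<notin> F\<close> that show ?thesis by (cases "x = t") auto
        qed
        ultimately show "F \<subseteq> {1..<top_index (\<alpha> - mset_set F)}"
          using F'(1) top by auto
      next
        assume "F \<subseteq> {1..<top_index (\<alpha> - mset_set F)}"
        then show "t \<notin> F" using top by auto
      qed
    qed
    have kface_iff: "F \<in> kface n ?I \<alpha> i \<longleftrightarrow> mset_set F \<subseteq># \<alpha> \<and> \<alpha> - mset_set F \<in> ?I \<and> card F = i"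
      if "finite F" for F
      using that al mset_set_subset_iff[OF that] by (auto simp: kface_def)
    show ?thesis
    proof (intro set_eqI iffI)
      fix F assume "F \<in> {G \<in> kface n ?I \<alpha> i. t \<notin> G \<and> insert t G \<notin> kface n ?I \<alpha> (Suc i)}"
      then have F: "F \<in> kface n ?I \<alpha> i" "t \<notin> F" "insert t F \<notin> kface n ?I \<alpha> (Suc i)"
        by simp_all
      then have "\<alpha> - mset_set F \<in> mingens ?I"
        using insert_maxvar_kface_iff[OF mu al False F(1)] by (simp add: t_def)
      then show "F \<in> ek_symbols ?I \<alpha> i"
        using F face_iff[OF F(1)] kface_memD[OF F(1)] by (simp add: ek_symbols_def)
    next
      fix F assume "F \<in> ek_symbols ?I \<alpha> i"
      then have F: "mset_set F \<subseteq># \<alpha>" "\<alpha> - mset_set F \<in> mingens ?I"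
          "F \<subseteq> {1..<top_index (\<alpha> - mset_set F)}" "card F = i"
        by (simp_all add: ek_symbols_def)
      have "finite F" using F(3) finite_subset by blast
      then have Fk: "F \<in> kface n ?I \<alpha> i"
        using kface_iff F(1,2,4) mingens_subset by blast
      moreover have "t \<notin> F" using face_iff[OF Fk] F(3) by simp
      moreover have "insert t F \<notin> kface n ?I \<alpha> (Suc i)"
        using insert_maxvar_kface_iff[OF mu al False Fk] \<open>t \<notin> F\<close> F(2) by (simp add: t_def)
      ultimately show "F \<in> {G \<in> kface n ?I \<alpha> i. t \<notin> G \<and> insert t G \<notin> kface n ?I \<alpha> (Suc i)}"
        by simp
    qed
  qed
  then show ?thesis
    using khomdim_Borel[OF mu al, of T i] by (simp add: t_def)
qed

lemma atLeastLessThan_top_index_subset: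
  assumes "set_mset g \<subseteq> {1..n}"
  shows "{1..<top_index g} \<subseteq> {1..n}"
proof -
  have "top_index g \<le> max 1 n"
    using assms by (intro top_index_le) auto
  then show ?thesis by auto
qed

text \<open>Summing the multigraded pieces: the pairs \<open>(\<alpha>, F)\<close> with \<open>F\<close> an Eliahou--Kervaire symbol
  in degree \<open>\<alpha>\<close> correspond to the pairs \<open>(g, F)\<close> with \<open>g\<close> a minimal generator and
  \<open>F \<subseteq> {1..<max g}\<close>, via \<open>\<alpha> = g \<cdot> x\<^sub>F\<close>.\<close>

lemma betti_Borel:
  fixes T :: "'a::field itself"
  assumes mu: "set_mset \<mu> \<subseteq> {1..n}"
  shows "betti T n (Borel n \<mu>) i = (\<Sum>g\<in>mingens (Borel n \<mu>). (top_index g - 1) choose i)"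
proof -
  define I where "I = Borel n \<mu>"
  define E where "E \<alpha> = ek_symbols I \<alpha> i" for \<alpha>
  define A where "A = {\<alpha> \<in> monomials n. card (E \<alpha>) \<noteq> 0}"
  define Q where "Q = (SIGMA g:mingens I. {F. F \<subseteq> {1..<top_index g} \<and> card F = i})"
  define \<phi> where "\<phi> p = (fst p + mset_set (snd p), snd p)" for p :: "mon \<times> nat set"
  have kh: "khomdim T n I \<alpha> i = card (E \<alpha>)" if "\<alpha> \<in> monomials n" for \<alpha>
    using khomdim_Borel_eq_card_ek_symbols[OF mu, of \<alpha> T i] that
    unfolding I_def E_def monomials_def by simp
  have betti_eq: "betti T n I i = (\<Sum>\<alpha>\<in>A. card (E \<alpha>))"
    unfolding betti_def A_def using kh by (intro sum.cong) auto
  have gens: "set_mset g \<subseteq> {1..n}" if "g \<in> mingens I" for g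
    using that mingens_subset Borel_subset_monomials unfolding I_def monomials_def by blast
  have Sigma_eq: "Sigma A E = \<phi> ` Q"
  proof (intro set_eqI iffI)
    fix p assume "p \<in> Sigma A E"
    then obtain \<alpha> F where p: "p = (\<alpha>, F)" "F \<in> E \<alpha>" by auto
    then have F: "mset_set F \<subseteq># \<alpha>" "\<alpha> - mset_set F \<in> mingens I"
        "F \<subseteq> {1..<top_index (\<alpha> - mset_set F)}" "card F = i"
      by (simp_all add: E_def ek_symbols_def)
    then have "p = \<phi> (\<alpha> - mset_set F, F)" using p(1) by (simp add: \<phi>_def)
    moreover have "(\<alpha> - mset_set F, F) \<in> Q" using F by (simp add: Q_def)
    ultimately show "p \<in> \<phi> ` Q" by blast
  next
    fix p assume "p \<in> \<phi> ` Q"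
    then obtain g F where g: "g \<in> mingens I" and F: "F \<subseteq> {1..<top_index g}" "card F = i"
      and p: "p = (g + mset_set F, F)"
      by (auto simp: Q_def \<phi>_def)
    have "finite F" using F(1) finite_subset by blast
    have FE: "F \<in> E (g + mset_set F)"
      using g F by (simp add: E_def ek_symbols_def)
    have "F \<subseteq> {1..n}" using F(1) atLeastLessThan_top_index_subset[OF gens[OF g]] by blast
    then have "g + mset_set F \<in> monomials n"
      using gens[OF g] \<open>finite F\<close> by (auto simp: monomials_def)
    moreover have "card (E (g + mset_set F)) \<noteq> 0"
      using FE finite_ek_symbols by (auto simp: E_def card_eq_0_iff)
    ultimately show "p \<in> Sigma A E" using FE p by (simp add: A_def)
  qed
  have fin_Q: "finite Q"
    using finite_mingens_Borel[OF mu] by (auto simp: Q_def I_def)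
  have fin_A: "finite A"
  proof (rule finite_subset)
    show "A \<subseteq> fst ` Sigma A E"
      by (force simp: A_def card_eq_0_iff)
    show "finite (fst ` Sigma A E)"
      using Sigma_eq fin_Q by simp
  qed
  have "(\<Sum>\<alpha>\<in>A. card (E \<alpha>)) = card (Sigma A E)"
    using fin_A by (simp add: card_SigmaI E_def finite_ek_symbols)
  also have "\<dots> = card Q"
    unfolding Sigma_eq by (rule card_image) (auto intro!: inj_onI simp: \<phi>_def prod_eq_iff)
  also have "\<dots> = (\<Sum>g\<in>mingens I. card {F. F \<subseteq> {1..<top_index g} \<and> card F = i})"
    unfolding Q_def using finite_mingens_Borel[OF mu] by (intro card_SigmaI) (auto simp: I_def)
  also have "\<dots> = (\<Sum>g\<in>mingens I. (top_index g - 1) choose i)"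
    by (simp add: n_subsets)
  finally show ?thesis using betti_eq by (simp add: I_def)
qed

section \<open>Minimal generators of \<open>Borel(m)\<close> and of \<open>Borel(m / x\<^sub>k)\<close>\<close>

lemma dominates_same_size_le:
  assumes "dominates g m" "size g = size m" "\<forall>x\<in>#m. x \<le> j"
  shows "\<forall>x\<in>#g. x \<le> j"
proof -
  have "size m \<le> count_le g j"
    using assms(1,3) count_le_eq_size_iff[of m j] by (metis dominates_def)
  then have "count_le g j = size g"
    using assms(2) count_le_le_size[of g j] by simp
  then show ?thesis by (simp add: count_le_eq_size_iff)
qed

lemma sum_choose_pred_atLeastAtMost:
  assumes "1 \<le> M" "M \<le> k"
  shows "(\<Sum>l\<in>{M..k}. (l - 1) choose i) + ((M - 1) choose Suc i) = k choose Suc i"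
  using assms(2)
proof (induction k)
  case (Suc k)
  show ?case
  proof (cases "M = Suc k")
    case False
    then have "M \<le> k" using Suc.prems by simp
    then have "{M..Suc k} = insert (Suc k) {M..k}" by auto
    then show ?thesis using Suc.IH[OF \<open>M \<le> k\<close>] by simp
  qed simp
qed (use assms(1) in simp)

context
  fixes n k :: nat and m :: mon
  assumes m_ne: "m \<noteq> {#}" and m_sub: "set_mset m \<subseteq> {1..n}" and m_max: "maxvar m = k"
begin

lemma m_eq: "m = add_mset k (m - {#k#})"
  using maxvar_in[OF m_ne] m_max by simp

lemma m_diff_sub: "set_mset (m - {#k#}) \<subseteq> {1..n}"
  using m_sub by (auto dest: in_diffD)

lemma m_le_k: "\<forall>x\<in>#m. x \<le> k"
  using le_maxvar m_max by blast

lemma k_range: "1 \<le> k" "k \<le> n"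
  using maxvar_in[OF m_ne] m_sub m_max by auto

lemma top_index_mingens_le:
  assumes "g' \<in> mingens (Borel n (m - {#k#}))"
  shows "top_index g' \<le> k"
proof -
  have "dominates g' (m - {#k#})" "size g' = size (m - {#k#})"
    using assms mingens_Borel[OF m_diff_sub] by auto
  moreover have "\<forall>x\<in>#m - {#k#}. x \<le> k"
    using m_le_k by (auto dest: in_diffD)
  ultimately show ?thesis
    using dominates_same_size_le k_range(1) by (blast intro: top_index_le)
qed

lemma add_mset_in_mingens_Borel:
  assumes g': "g' \<in> mingens (Borel n (m - {#k#}))" and l: "top_index g' \<le> l" "l \<le> k"
  shows "add_mset l g' \<in> mingens (Borel n m)"
proof -
  have g'_props: "set_mset g' \<subseteq> {1..n}" "dominates g' (m - {#k#})" "size g' = size (m - {#k#})"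
    using g' mingens_Borel[OF m_diff_sub] by auto
  have "1 \<le> l" using top_index_ge_1[of g'] l(1) by simp
  then have "set_mset (add_mset l g') \<subseteq> {1..n}"
    using g'_props(1) l(2) k_range(2) by auto
  moreover have "size (add_mset l g') = size m"
    using g'_props(3) m_eq by (metis size_add_mset)
  moreover have "dominates (add_mset l g') m"
    unfolding dominates_def
  proof
    fix j
    have "count_le (m - {#k#}) j \<le> count_le g' j"
      using g'_props(2) by (simp add: dominates_def)
    moreover have "count_le m j = count_le (m - {#k#}) j + (if k \<le> j then 1 else 0)"
      by (subst m_eq) simp
    ultimately show "count_le m j \<le> count_le (add_mset l g') j"
      using l(2) by auto
  qed
  ultimately show ?thesis using mingens_Borel[OF m_sub] by simp
qed

lemma mingens_Borel_remove_max:
  assumes g: "g \<in> mingens (Borel n m)"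
  defines "l \<equiv> maxvar g"
  shows "g = add_mset l (g - {#l#})" "g - {#l#} \<in> mingens (Borel n (m - {#k#}))"
    "top_index (g - {#l#}) \<le> l" "l \<le> k"
proof -
  have g_props: "set_mset g \<subseteq> {1..n}" "dominates g m" "size g = size m"
    using g mingens_Borel[OF m_sub] by auto
  then have "g \<noteq> {#}" using m_ne by auto
  then have lg: "l \<in># g" by (simp add: l_def maxvar_in)
  then show g_eq: "g = add_mset l (g - {#l#})" by simp
  define g' where "g' = g - {#l#}"
  have g'_le: "\<forall>x\<in>#g'. x \<le> l"
    by (auto simp: g'_def l_def dest: in_diffD intro: le_maxvar)
  show "l \<le> k"
    using dominates_same_size_le[OF g_props(2,3) m_le_k] lg by blast
  show "top_index (g - {#l#}) \<le> l"
    using lg g_props(1) g'_le by (auto simp: g'_def intro!: top_index_le)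
  have size_eq: "size g' = size (m - {#k#})"
    using g_props(3) g_eq m_eq by (metis g'_def size_add_mset nat.inject)
  have "dominates g' (m - {#k#})"
    unfolding dominates_def
  proof
    fix j
    have "count_le m j \<le> count_le g j"
      using g_props(2) by (simp add: dominates_def)
    moreover have "count_le g j = count_le g' j + (if l \<le> j then 1 else 0)"
      by (subst g_eq) (simp add: g'_def)
    moreover have "count_le m j = count_le (m - {#k#}) j + (if k \<le> j then 1 else 0)"
      by (subst m_eq) simp
    moreover have "l \<le> j \<Longrightarrow> count_le g' j = size g'"
      using g'_le count_le_eq_size_iff by force
    ultimately show "count_le (m - {#k#}) j \<le> count_le g' j"
      using size_eq count_le_le_size[of "m - {#k#}" j] \<open>l \<le> k\<close> by (auto split: if_splits)
  qed
  moreover have "set_mset g' \<subseteq> {1..n}"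
    using g_props(1) by (auto simp: g'_def dest: in_diffD)
  ultimately show "g - {#l#} \<in> mingens (Borel n (m - {#k#}))"
    using size_eq mingens_Borel[OF m_diff_sub] by (simp add: g'_def)
qed

lemma mingens_Borel_eq_image:
  "mingens (Borel n m) =
    (\<lambda>(g', l). add_mset l g') ` (SIGMA g':mingens (Borel n (m - {#k#})). {top_index g'..k})"
proof (intro set_eqI iffI)
  fix g assume "g \<in> mingens (Borel n m)"
  from mingens_Borel_remove_max[OF this] show
    "g \<in> (\<lambda>(g', l). add_mset l g') ` (SIGMA g':mingens (Borel n (m - {#k#})). {top_index g'..k})"
    by (intro image_eqI[where x = "(g - {#maxvar g#}, maxvar g)"]) auto
next
  fix g assume "g \<in> (\<lambda>(g', l). add_mset l g') ` (SIGMA g':mingens (Borel n (m - {#k#})). {top_index g'..k})"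
  then show "g \<in> mingens (Borel n m)"
    using add_mset_in_mingens_Borel by auto
qed

lemma inj_on_add_mset_top_index:
  "inj_on (\<lambda>(g', l). add_mset l g') (SIGMA g':G. {top_index g'..k})"
proof (rule inj_onI, clarsimp)
  fix g' l h' l'
  assume "top_index g' \<le> l" "top_index h' \<le> l'" "add_mset l g' = add_mset l' h'"
  then show "g' = h' \<and> l = l'"
    using top_index_add_mset by (metis add_mset_eq_singleton_iff add_mset_remove_trivial)
qed

lemma sum_mingens_Borel:
  "(\<Sum>g\<in>mingens (Borel n m). f (top_index g)) =
   (\<Sum>g'\<in>mingens (Borel n (m - {#k#})). \<Sum>l\<in>{top_index g'..k}. f l)"
proof -
  have "(\<Sum>g\<in>mingens (Borel n m). f (top_index g)) =
      (\<Sum>(g', l)\<in>(SIGMA g':mingens (Borel n (m - {#k#})). {top_index g'..k}). f (top_index (add_mset l g')))"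
    unfolding mingens_Borel_eq_image by (subst sum.reindex[OF inj_on_add_mset_top_index]) (simp add: case_prod_beta)
  also have "\<dots> = (\<Sum>(g', l)\<in>(SIGMA g':mingens (Borel n (m - {#k#})). {top_index g'..k}). f l)"
    by (intro sum.cong refl) (auto simp: top_index_add_mset)
  also have "\<dots> = (\<Sum>g'\<in>mingens (Borel n (m - {#k#})). \<Sum>l\<in>{top_index g'..k}. f l)"
    using finite_mingens_Borel[OF m_diff_sub] by (simp add: sum.Sigma)
  finally show ?thesis .
qed

lemma w_Borel: "w k (Borel n m) = card (mingens (Borel n (m - {#k#})))"
proof -
  have "{g \<in> mingens (Borel n m). maxvar g = k} = add_mset k ` mingens (Borel n (m - {#k#}))"
  proof (intro set_eqI iffI)
    fix g assume "g \<in> {g \<in> mingens (Borel n m). maxvar g = k}"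
    then show "g \<in> add_mset k ` mingens (Borel n (m - {#k#}))"
      using mingens_Borel_remove_max(1,2)[of g] by force
  next
    fix g assume "g \<in> add_mset k ` mingens (Borel n (m - {#k#}))"
    then obtain g' where g': "g' \<in> mingens (Borel n (m - {#k#}))" "g = add_mset k g'" by auto
    have "top_index g' \<le> k" using top_index_mingens_le[OF g'(1)] .
    then have "g \<in> mingens (Borel n m)"
      using add_mset_in_mingens_Borel[OF g'(1)] g'(2) by simp
    moreover have "maxvar g = k"
      unfolding maxvar_def g'(2)
      using \<open>top_index g' \<le> k\<close> le_top_index[of _ g'] by (intro Max_eqI) force+
    ultimately show "g \<in> {g \<in> mingens (Borel n m). maxvar g = k}" by simp
  qed
  then show ?thesis
    unfolding w_def by (simp add: card_image inj_on_def)
qed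

end

theorem proposition7p1:
  fixes T :: "'a::field itself" and n k i :: nat and m :: mon
  assumes "m \<noteq> {#}" and "set_mset m \<subseteq> {1..n}" and "maxvar m = k"
  shows "(if i = 0 then 0 else betti T n (Borel n m) (i - 1))
           + betti T n (Borel n (m - {#k#})) i
         = (k choose i) * w k (Borel n m)"
proof -
  define G' where "G' = mingens (Borel n (m - {#k#}))"
  have betti': "betti T n (Borel n (m - {#k#})) j = (\<Sum>g\<in>G'. (top_index g - 1) choose j)" for j
    unfolding G'_def using betti_Borel[OF m_diff_sub[OF assms]] .
  have w: "w k (Borel n m) = card G'"
    unfolding G'_def by (rule w_Borel[OF assms])
  show ?thesis
  proof (cases i)
    case 0
    then show ?thesis using betti' w by simp
  next
    case (Suc i')
    have "betti T n (Borel n m) i' = (\<Sum>g'\<in>G'. \<Sum>l\<in>{top_index g'..k}. (l - 1) choose i')"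
      unfolding G'_def betti_Borel[OF assms(2)] by (rule sum_mingens_Borel[OF assms])
    then have "betti T n (Borel n m) i' + betti T n (Borel n (m - {#k#})) i
        = (\<Sum>g'\<in>G'. (\<Sum>l\<in>{top_index g'..k}. (l - 1) choose i') + ((top_index g' - 1) choose Suc i'))"
      by (simp add: betti' Suc sum.distrib)
    also have "\<dots> = (\<Sum>g'\<in>G'. k choose Suc i')"
      using top_index_mingens_le[OF assms] top_index_ge_1
      by (intro sum.cong refl sum_choose_pred_atLeastAtMost) (auto simp: G'_def)
    finally show ?thesis using w Suc by simp
  qed
qed

end
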